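(* Let $p=1$, $C_{\mathcal Y}>0$, and suppose there exist $x_1,x_2,x_3\in\mathcal X$ with $d_{\mathcal X}(x_3,x_1)=d_{\mathcal X}(x_3,x_2)=C_{\mathcal X}$ and $y_1\in\mathcal Y$ with $d_{\mathcal Y}(y_0,y_1)=C_{\mathcal Y}$. Let $\tilde d$ be defined by the GOSPA2 formula with $p=1$ but with penalty $C_2=C_{\mathcal X}+\frac12C_{\mathcal Y}$. Consider the graphs $G_1=([1],v,e)$ with $v_1=x_3$; $G_2=([2],w,f)$ with $w_1=x_1,w_2=x_2$, $f_{12}=f_{21}=y_1$ and $f_{ij}=y_0$ otherwise; $G_3=([3],u,g)$ with $u_i=x_i$ ($i\in[3]$), $g_{12}=g_{21}=y_1$ and $g_{ij}=y_0$ otherwise. Then $\tilde d(G_1,G_2)=C_2+\frac14C_{\mathcal Y}$ while $\tilde d(G_1,G_3)+\tilde d(G_3,G_2)\le C_2+\frac16C_{\mathcal Y}$; in particular $\tilde d$ violates the triangle inequality.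
   Context: Let $(\mathcal X,d_{\mathcal X})$ and $(\mathcal Y,d_{\mathcal Y})$ be pseudometric spaces with $\mathrm{diam}(\mathcal X)\le C_{\mathcal X}$, $\mathrm{diam}(\mathcal Y)\le C_{\mathcal Y}$, with a distinguished element $y_0\in\mathcal Y$ meaning "no edge". For $n\in\mathbb N_0$ write $[n]=\{1,\dots,n\}$ and $S_n$ for the permutations of $[n]$. An attributed simple graph is a triple $([n],v,e)$ with $v:[n]\to\mathcal X$ and $e:[n]^2\to\mathcal Y$ symmetric with $e(i,i)=y_0$; write $v_i=v(i)$, $e_{ii'}=e(i,i')$. The GOSPA2 formula with order $p$ and penalty $C_2$: for $([m],v,e),([n],w,f)$ with $n\ge\max\{m,1\}$ (otherwise swap), with $0/0:=0$, $$\frac{1}{n^{1/p}}\min_{\pi\in S_n}\Big[(n-m)C_2^p+\sum_{i\in[m]}d_{\mathcal X}(v_i,w_{\pi(i)})^p+\frac12\frac1{n-1}\Big(\sum_{(i,i')\in[m]^2}d_{\mathcal Y}(e_{ii'},f_{\pi(i)\pi(i')})^p+\sum_{(i,i')\in[n]^2\setminus[m]^2}d_{\mathcal Y}(y_0,f_{\pi(i)\pi(i')})^p\Big)\Big]^{1/p}.$$ *)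

theory Defs
  imports Complex_Main "HOL-Combinatorics.Permutations"
begin

definition pseudometric :: "('a \<Rightarrow> 'a \<Rightarrow> real) \<Rightarrow> bool" where
  "pseudometric d \<longleftrightarrow> (\<forall>a. d a a = 0) \<and> (\<forall>a b. d a b = d b a) \<and>
     (\<forall>a b c. d a c \<le> d a b + d b c)"

(* An attributed graph ([n], v, e) is represented as the triple (n, v, e);
   only the values of v on {1..n} and of e on {1..n}^2 matter. *)
type_synonym ('x,'y) agraph = "nat \<times> (nat \<Rightarrow> 'x) \<times> (nat \<Rightarrow> nat \<Rightarrow> 'y)"

definition is_attr_graph :: "'y \<Rightarrow> ('x,'y) agraph \<Rightarrow> bool" where
  "is_attr_graph y0 G = (case G of (n, v, e) \<Rightarrow>
     (\<forall>i\<in>{1..n}. \<forall>j\<in>{1..n}. e i j = e j i) \<and> (\<forall>i\<in>{1..n}. e i i = y0))"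

(* the bracketed cost for a fixed permutation pi, where m <= n *)
definition gospa2_cost ::
  "('x \<Rightarrow> 'x \<Rightarrow> real) \<Rightarrow> ('y \<Rightarrow> 'y \<Rightarrow> real) \<Rightarrow> 'y \<Rightarrow> real \<Rightarrow> real \<Rightarrow>
   ('x,'y) agraph \<Rightarrow> ('x,'y) agraph \<Rightarrow> (nat \<Rightarrow> nat) \<Rightarrow> real" where
  "gospa2_cost dX dY y0 p C2 G H \<pi> = (case G of (m, v, e) \<Rightarrow> case H of (n, w, f) \<Rightarrow>
     (real n - real m) * C2 powr p
     + (\<Sum>i\<in>{1..m}. dX (v i) (w (\<pi> i)) powr p)
     + (1/2) * (1 / (real n - 1)) *
       ((\<Sum>(i,i')\<in>{1..m}\<times>{1..m}. dY (e i i') (f (\<pi> i) (\<pi> i')) powr p)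
        + (\<Sum>(i,i')\<in>({1..n}\<times>{1..n}) - ({1..m}\<times>{1..m}). dY y0 (f (\<pi> i) (\<pi> i')) powr p)))"

(* the GOSPA2 formula for m <= n, n >= 1 (division by 0 is 0 in Isabelle, matching 0/0 := 0) *)
definition gospa2_ord ::
  "('x \<Rightarrow> 'x \<Rightarrow> real) \<Rightarrow> ('y \<Rightarrow> 'y \<Rightarrow> real) \<Rightarrow> 'y \<Rightarrow> real \<Rightarrow> real \<Rightarrow>
   ('x,'y) agraph \<Rightarrow> ('x,'y) agraph \<Rightarrow> real" where
  "gospa2_ord dX dY y0 p C2 G H =
     (1 / real (fst H) powr (1/p)) *
     (Min {gospa2_cost dX dY y0 p C2 G H \<pi> | \<pi>. \<pi> permutes {1..fst H}}) powr (1/p)"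

definition gospa2 ::
  "('x \<Rightarrow> 'x \<Rightarrow> real) \<Rightarrow> ('y \<Rightarrow> 'y \<Rightarrow> real) \<Rightarrow> 'y \<Rightarrow> real \<Rightarrow> real \<Rightarrow>
   ('x,'y) agraph \<Rightarrow> ('x,'y) agraph \<Rightarrow> real" where
  "gospa2 dX dY y0 p C2 G H =
     (if fst G = 0 \<and> fst H = 0 then 0
      else if fst G \<le> fst H then gospa2_ord dX dY y0 p C2 G H
      else gospa2_ord dX dY y0 p C2 H G)"

end

theory Submission
  imports Defs
begin

text \<open>For \<open>p = 1\<close> the distance is the optimal assignment cost divided by the order of the
  larger graph. Between \<open>G\<^sub>1\<close> and \<open>G\<^sub>2\<close> the vertex \<open>x\<^sub>3\<close> must be matched to
  \<open>x\<^sub>1\<close> or \<open>x\<^sub>2\<close> (cost \<open>C\<^sub>X\<close>), one vertex is missing (cost \<open>C\<^sub>2\<close>) and the edge of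
  \<open>G\<^sub>2\<close> is unmatched (cost \<open>C\<^sub>Y\<close>), so the distance is \<open>(C\<^sub>2 + C\<^sub>X + C\<^sub>Y)/2\<close>.
  Passing through \<open>G\<^sub>3\<close>, which contains both graphs, only missing vertices and the
  edge are paid for: matching \<open>x\<^sub>3\<close> to its copy gives at most \<open>(2 C\<^sub>2 + C\<^sub>Y/2)/3\<close> and
  the inclusion of \<open>G\<^sub>2\<close> gives at most \<open>C\<^sub>2/3\<close>, in total \<open>C\<^sub>2 + C\<^sub>Y/6\<close>.\<close>

lemma pseudometric_nonneg:
  assumes "pseudometric d"
  shows "0 \<le> d a b"
proof -
  have "d a a \<le> d a b + d b a" "d a b = d b a" "d a a = 0"
    using assms unfolding pseudometric_def by blast+
  then show ?thesis by linarith
qed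

lemma pseudometric_refl [simp]: "pseudometric d \<Longrightarrow> d a a = 0"
  unfolding pseudometric_def by blast

lemma permutes_pair_cases:
  assumes "\<pi> permutes {a, b}"
  obtains "\<pi> a = a" "\<pi> b = b" | "\<pi> a = b" "\<pi> b = a"
proof -
  have "\<pi> a \<in> {a, b}" "\<pi> b \<in> {a, b}"
    using permutes_in_image[OF assms] by auto
  moreover have "a \<noteq> b \<Longrightarrow> \<pi> a \<noteq> \<pi> b"
    using permutes_inj[OF assms] by (auto dest: injD)
  ultimately show ?thesis using that by (cases "a = b") auto
qed

lemma Min_permutes_le:
  fixes f :: "('a \<Rightarrow> 'a) \<Rightarrow> 'b::linorder"
  assumes "finite S" "\<pi> permutes S"
  shows "Min {f \<sigma> | \<sigma>. \<sigma> permutes S} \<le> f \<pi>"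
  using assms by (intro Min_le) (auto simp: finite_permutations)

lemma Min_permutes_ge:
  fixes f :: "('a \<Rightarrow> 'a) \<Rightarrow> 'b::linorder"
  assumes "finite S" "\<And>\<pi>. \<pi> permutes S \<Longrightarrow> c \<le> f \<pi>"
  shows "c \<le> Min {f \<pi> | \<pi>. \<pi> permutes S}"
proof -
  have "{f \<pi> | \<pi>. \<pi> permutes S} \<noteq> {}"
    using permutes_id by blast
  then show ?thesis
    using assms by (subst Min_ge_iff) (auto simp: finite_permutations)
qed

lemma Min_permutes_const:
  assumes "\<And>\<pi>. \<pi> permutes S \<Longrightarrow> f \<pi> = c"
  shows "Min {f \<pi> | \<pi>. \<pi> permutes S} = c"
proof -
  have "{f \<pi> | \<pi>. \<pi> permutes S} = {c}"
    using assms permutes_id by blast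
  then show ?thesis by simp
qed

lemma gospa2_cost_nonneg:
  assumes "m \<le> n" "1 \<le> n"
  shows "0 \<le> gospa2_cost dX dY y0 p C2 (m, v, e) (n, w, f) \<pi>"
  unfolding gospa2_cost_def using assms
  by (auto intro!: add_nonneg_nonneg mult_nonneg_nonneg divide_nonneg_nonneg sum_nonneg
      simp: split_beta)

lemma gospa2_order_one:
  assumes "m \<le> n" "1 \<le> n"
  shows "gospa2 dX dY y0 1 C2 (m, v, e) (n, w, f) =
           Min {gospa2_cost dX dY y0 1 C2 (m, v, e) (n, w, f) \<pi> | \<pi>. \<pi> permutes {1..n}} / n"
proof -
  have "0 \<le> Min {gospa2_cost dX dY y0 1 C2 (m, v, e) (n, w, f) \<pi> | \<pi>. \<pi> permutes {1..n}}"
    using assms by (intro Min_permutes_ge gospa2_cost_nonneg) auto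
  then show ?thesis
    using assms by (simp add: gospa2_def gospa2_ord_def)
qed

lemma gospa2_swap:
  assumes "fst G \<noteq> fst H"
  shows "gospa2 dX dY y0 p C2 G H = gospa2 dX dY y0 p C2 H G"
  using assms by (auto simp: gospa2_def)

lemma small_intervals_nat: "{1..1::nat} = {1}" "{1..2::nat} = {1, 2}" "{1..3::nat} = {1, 2, 3}"
  by auto

definition one_vertex_graph :: "'x \<Rightarrow> 'y \<Rightarrow> ('x, 'y) agraph" where
  "one_vertex_graph x y0 = (1, \<lambda>i. x, \<lambda>i j. y0)"

definition one_edge_graph :: "'x \<Rightarrow> 'x \<Rightarrow> 'y \<Rightarrow> 'y \<Rightarrow> ('x, 'y) agraph" where
  "one_edge_graph x1 x2 y0 y1 = (2, \<lambda>i. if i = 1 then x1 else x2,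
     \<lambda>i j. if (i = 1 \<and> j = 2) \<or> (i = 2 \<and> j = 1) then y1 else y0)"

definition one_edge_plus_vertex_graph :: "'x \<Rightarrow> 'x \<Rightarrow> 'x \<Rightarrow> 'y \<Rightarrow> 'y \<Rightarrow> ('x, 'y) agraph" where
  "one_edge_plus_vertex_graph x1 x2 x3 y0 y1 =
     (3, \<lambda>i. if i = 1 then x1 else if i = 2 then x2 else x3,
     \<lambda>i j. if (i = 1 \<and> j = 2) \<or> (i = 2 \<and> j = 1) then y1 else y0)"

lemma gospa2_one_vertex_one_edge:
  assumes "pseudometric dX" "pseudometric dY" "0 \<le> C2"
    and "dX x3 x1 = CX" "dX x3 x2 = CX" "dY y0 y1 = CY"
  shows "gospa2 dX dY y0 1 C2 (one_vertex_graph x3 y0) (one_edge_graph x1 x2 y0 y1)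
           = (C2 + CX + CY) / 2"
proof -
  have CX: "0 \<le> CX" and CY: "0 \<le> CY"
    using assms pseudometric_nonneg by metis+
  have "gospa2_cost dX dY y0 1 C2 (one_vertex_graph x3 y0) (one_edge_graph x1 x2 y0 y1) \<pi>
          = C2 + CX + CY" if "\<pi> permutes {1..2}" for \<pi>
    using that unfolding small_intervals_nat
    by (cases rule: permutes_pair_cases;
        unfold gospa2_cost_def one_vertex_graph_def one_edge_graph_def prod.case
          small_intervals_nat;
        simp add: assms CX CY insert_Diff_if)
  then show ?thesis
    by (simp add: gospa2_order_one Min_permutes_const one_vertex_graph_def one_edge_graph_def)
qed

lemma gospa2_one_vertex_one_edge_plus_vertex_le:
  assumes "pseudometric dX" "pseudometric dY" "0 \<le> C2"
  shows "gospa2 dX dY y0 1 C2 (one_vertex_graph x3 y0)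
           (one_edge_plus_vertex_graph x1 x2 x3 y0 y1) \<le> (2 * C2 + dY y0 y1 / 2) / 3"
proof -
  let ?cost = "gospa2_cost dX dY y0 1 C2 (one_vertex_graph x3 y0)
                 (one_edge_plus_vertex_graph x1 x2 x3 y0 y1)"
  have "transpose 1 3 permutes {1..3::nat}"
    by (rule permutes_swap_id) auto
  then have "Min {?cost \<pi> | \<pi>. \<pi> permutes {1..3}} \<le> ?cost (transpose 1 3)"
    by (simp add: Min_permutes_le)
  also have "\<dots> = 2 * C2 + dY y0 y1 / 2"
    unfolding gospa2_cost_def one_vertex_graph_def one_edge_plus_vertex_graph_def prod.case
      small_intervals_nat
    using assms pseudometric_nonneg[OF assms(2), of y0 y1] by (simp add: insert_Diff_if)
  finally show ?thesis
    by (simp add: gospa2_order_one one_vertex_graph_def one_edge_plus_vertex_graph_def)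
qed

lemma gospa2_one_edge_plus_vertex_one_edge_le:
  assumes "pseudometric dX" "pseudometric dY" "0 \<le> C2"
  shows "gospa2 dX dY y0 1 C2 (one_edge_plus_vertex_graph x1 x2 x3 y0 y1)
           (one_edge_graph x1 x2 y0 y1) \<le> C2 / 3"
proof -
  let ?cost = "gospa2_cost dX dY y0 1 C2 (one_edge_graph x1 x2 y0 y1)
                 (one_edge_plus_vertex_graph x1 x2 x3 y0 y1)"
  have "Min {?cost \<pi> | \<pi>. \<pi> permutes {1..3}} \<le> ?cost id"
    by (simp add: Min_permutes_le permutes_id)
  also have "\<dots> = C2"
    unfolding gospa2_cost_def one_edge_graph_def one_edge_plus_vertex_graph_def prod.case
      small_intervals_nat
    using assms by (simp add: insert_Diff_if)
  finally show ?thesis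
    by (subst gospa2_swap)
      (simp_all add: gospa2_order_one one_edge_graph_def one_edge_plus_vertex_graph_def)
qed

theorem mainTheorem10:
  fixes dX :: "'x \<Rightarrow> 'x \<Rightarrow> real" and dY :: "'y \<Rightarrow> 'y \<Rightarrow> real"
    and CX CY :: real and y0 y1 :: 'y and x1 x2 x3 :: 'x
  assumes "pseudometric dX" and "pseudometric dY"
    and "\<forall>a b. dX a b \<le> CX" and "\<forall>a b. dY a b \<le> CY"
    and "CY > 0"
    and "dX x3 x1 = CX" and "dX x3 x2 = CX" and "dY y0 y1 = CY"
  defines "C2 \<equiv> CX + CY / 2"
    and "G1 \<equiv> (1::nat, (\<lambda>i. x3), (\<lambda>i j. y0))"
    and "G2 \<equiv> (2::nat, (\<lambda>i. if i = 1 then x1 else x2),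
                (\<lambda>i j. if (i = 1 \<and> j = 2) \<or> (i = 2 \<and> j = 1) then y1 else y0))"
    and "G3 \<equiv> (3::nat, (\<lambda>i. if i = 1 then x1 else if i = 2 then x2 else x3),
                (\<lambda>i j. if (i = 1 \<and> j = 2) \<or> (i = 2 \<and> j = 1) then y1 else y0))"
    and "dt \<equiv> gospa2 dX dY y0 1 (CX + CY / 2)"
  shows "dt G1 G2 = C2 + CY / 4
    \<and> dt G1 G3 + dt G3 G2 \<le> C2 + CY / 6
    \<and> dt G1 G3 + dt G3 G2 < dt G1 G2"
proof -
  have C2: "0 \<le> CX + CY / 2"
    using assms(1,5,6) pseudometric_nonneg[of dX x3 x1] by simp
  have graphs: "G1 = one_vertex_graph x3 y0" "G2 = one_edge_graph x1 x2 y0 y1"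
    "G3 = one_edge_plus_vertex_graph x1 x2 x3 y0 y1"
    by (simp_all add: G1_def G2_def G3_def one_vertex_graph_def one_edge_graph_def
        one_edge_plus_vertex_graph_def)
  have "dt G1 G2 = (CX + CY / 2 + CX + CY) / 2"
    unfolding dt_def graphs by (rule gospa2_one_vertex_one_edge[OF assms(1,2) C2 assms(6-8)])
  moreover have "dt G1 G3 \<le> (2 * (CX + CY / 2) + dY y0 y1 / 2) / 3"
    unfolding dt_def graphs by (rule gospa2_one_vertex_one_edge_plus_vertex_le[OF assms(1,2) C2])
  moreover have "dt G3 G2 \<le> (CX + CY / 2) / 3"
    unfolding dt_def graphs by (rule gospa2_one_edge_plus_vertex_one_edge_le[OF assms(1,2) C2])
  ultimately show ?thesis
    using \<open>CY > 0\<close> \<open>dY y0 y1 = CY\<close> unfolding C2_def by auto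
qed

end
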